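(* Let $k\ge 2$ be an integer and let $J$ be a $k$-januarial. Then every vertex of the common graph $\Upsilon$ of $J$ has even valency.
   Context: Let $\Delta(2,k,\ell)=\langle x,y:x^2=y^k=(xy)^\ell=1\rangle$, acting on a finite set $S$. The coset graph has: - vertex set $S$; - an undirected $x$-edge joining each pair of points transposed by $x$ (points fixed by $x$ carry no $x$-edge); - a directed $y$-edge $u\to uy$. It is $2$-cell embedded in a closed orientable surface via the rotation system (incoming $y$-edge, outgoing $y$-edge, $x$-edge) at each vertex. The faces are $y$-faces (boundary label $y^n$, $n\mid k$) and $xy$-faces (boundary label $(xy)^m$). This is the coset diagram. A $k$-januarial is the coset diagram of an action of $\Delta(2,k,\ell)$, for some $\ell$, in which $\langle xy\rangle$ has exactly two orbits, each of size $|S|/2$. Let $S_1,S_2$ be the closures of its two $xy$-faces. Collapsing each $y$-face to a point gives the companion graph/diagram, in which the $x$-edges become edges between the collapsed $y$-faces. Let $S_i'$ be the image of $S_i$. The common graph is $\Upsilon=S_1'\cap S_2'$. *)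

theory Defs
  imports "HOL-Combinatorics.Permutations"
begin

text \<open>Points are acted on from the right: u.x = x u, u.y = y u, and
  u.(xy) = (u.x).y = (y o x) u.\<close>

text \<open>Orbit of a point under the cyclic group generated by a permutation f of a
  finite set (non-negative powers suffice, since f has finite order).\<close>
definition cyc_orbit :: "('a \<Rightarrow> 'a) \<Rightarrow> 'a \<Rightarrow> 'a set" where
  "cyc_orbit f u = {(f ^^ n) u | n. True}"

definition triangle_action :: "nat \<Rightarrow> 'a set \<Rightarrow> ('a \<Rightarrow> 'a) \<Rightarrow> ('a \<Rightarrow> 'a) \<Rightarrow> bool" where
  "triangle_action k S x y \<longleftrightarrow>
     finite S \<and> x permutes S \<and> y permutes S \<and>
     (\<forall>u\<in>S. x (x u) = u) \<and> (\<forall>u\<in>S. (y ^^ k) u = u) \<and>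
     (\<exists>l>0. \<forall>u\<in>S. ((y \<circ> x) ^^ l) u = u)"

text \<open>The orbits of <xy>; each corresponds to one xy-face of the coset diagram.\<close>
definition xy_orbits :: "'a set \<Rightarrow> ('a \<Rightarrow> 'a) \<Rightarrow> ('a \<Rightarrow> 'a) \<Rightarrow> 'a set set" where
  "xy_orbits S x y = {cyc_orbit (y \<circ> x) u | u. u \<in> S}"

definition januarial :: "nat \<Rightarrow> 'a set \<Rightarrow> ('a \<Rightarrow> 'a) \<Rightarrow> ('a \<Rightarrow> 'a) \<Rightarrow> bool" where
  "januarial k S x y \<longleftrightarrow>
     triangle_action k S x y \<and> card (xy_orbits S x y) = 2 \<and>
     (\<forall>F\<in>xy_orbits S x y. 2 * card F = card S)"

text \<open>Closure of the xy-face with point set F (an <xy>-orbit): its boundary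
  traverses u, ux, uxy, ... for u in F, so its vertices are F \<union> Fx and its
  x-edges are {u, ux} for u in F with ux \<noteq> u (its y-edges are collapsed in the
  companion diagram).\<close>
definition face_vertices :: "('a \<Rightarrow> 'a) \<Rightarrow> 'a set \<Rightarrow> 'a set" where
  "face_vertices x F = F \<union> x ` F"

definition face_xedges :: "('a \<Rightarrow> 'a) \<Rightarrow> 'a set \<Rightarrow> 'a set set" where
  "face_xedges x F = {{u, x u} | u. u \<in> F \<and> x u \<noteq> u}"

text \<open>Companion diagram: vertices are the y-faces (orbits of <y>), the x-edge
  {u, ux} becomes an edge joining the y-faces of u and ux. Image S' of the closed
  face F: (vertex set, edge set).\<close>
definition companion_image ::
  "('a \<Rightarrow> 'a) \<Rightarrow> ('a \<Rightarrow> 'a) \<Rightarrow> 'a set \<Rightarrow> 'a set set \<times> 'a set set" where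
  "companion_image x y F = (cyc_orbit y ` face_vertices x F, face_xedges x F)"

definition common_graph ::
  "('a \<Rightarrow> 'a) \<Rightarrow> ('a \<Rightarrow> 'a) \<Rightarrow> 'a set \<Rightarrow> 'a set \<Rightarrow> 'a set set \<times> 'a set set" where
  "common_graph x y F1 F2 =
     (fst (companion_image x y F1) \<inter> fst (companion_image x y F2),
      snd (companion_image x y F1) \<inter> snd (companion_image x y F2))"

text \<open>Valency of a vertex Y (a y-face) in a subgraph G of the companion diagram:
  number of edge-ends at Y, i.e. darts u (points of S in Y) whose x-edge {u, ux}
  lies in G; a loop contributes 2.\<close>
definition valency ::
  "'a set \<Rightarrow> ('a \<Rightarrow> 'a) \<Rightarrow> ('a \<Rightarrow> 'a) \<Rightarrow> 'a set set \<times> 'a set set \<Rightarrow> 'a set \<Rightarrow> nat" where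
  "valency S x y G Y = card {u \<in> S. x u \<noteq> u \<and> {u, x u} \<in> snd G \<and> cyc_orbit y u = Y}"

end

theory Submission
  imports Defs "HOL-Combinatorics.Orbits"
begin

text \<open>The two xy-faces partition S and xy maps each of them onto itself. Since
  u y = (u x) (xy), the points u x and u y lie in the same face. Hence the x-edge at u
  belongs to both faces exactly when y carries u from one face to the other. Walking
  once around the y-face Y, the face containing the current point changes an even
  number of times, and these changes are precisely the edge-ends at Y counted by the
  valency.\<close>

lemma cyc_orbit_eq_orbit:
  assumes "f permutes S" "finite S"
  shows "cyc_orbit f u = orbit f u"
proof -
  have "permutation f" using assms permutation_permutes by blast
  then show ?thesis unfolding cyc_orbit_def by (simp add: orbit_altdef_permutation)
qed

lemma orbit_eq_iff_mem:
  assumes "permutation f"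
  shows "orbit f z = orbit f a \<longleftrightarrow> z \<in> orbit f a"
proof
  assume "orbit f z = orbit f a"
  then show "z \<in> orbit f a" using permutation_self_in_orbit[OF assms, of z] by simp
next
  assume "z \<in> orbit f a"
  then show "orbit f z = orbit f a"
    by (rule orbit_cyclic_eq3[OF cyclic_on_orbit'[OF assms]])
qed

lemma orbit_step_mem_iff:
  assumes "permutation f"
  shows "f z \<in> orbit f a \<longleftrightarrow> z \<in> orbit f a"
proof
  assume "f z \<in> orbit f a"
  then have "orbit f z = orbit f a"
    using orbit_eq_iff_mem[OF assms] permutation_orbit_step[OF assms] by metis
  then show "z \<in> orbit f a" using orbit_eq_iff_mem[OF assms] by blast
qed (rule orbit.step)

lemma bij_betw_orbit:
  assumes "permutation f"
  shows "bij_betw f (orbit f a) (orbit f a)"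
proof (rule bij_betw_imageI)
  have "bij f" using assms by (rule permutation_bijective)
  then show "inj_on f (orbit f a)"
    by (metis bij_is_inj inj_on_subset subset_UNIV)
  have "w \<in> f ` orbit f a" if "w \<in> orbit f a" for w
  proof (rule image_eqI)
    have f_inv: "f (inv f w) = w"
      using \<open>bij f\<close> by (simp add: bij_is_surj surj_f_inv_f)
    then show "w = f (inv f w)"
      by simp
    show "inv f w \<in> orbit f a"
      using that orbit_step_mem_iff[OF assms, of "inv f w" a] f_inv by simp
  qed
  then show "f ` orbit f a = orbit f a"
    by (auto intro: orbit.step)
qed

lemma even_card_colour_changes:
  fixes P :: "'a \<Rightarrow> bool"
  assumes "finite Y" "bij_betw g Y Y"
  shows "even (card {w \<in> Y. P w \<noteq> P (g w)})"
proof -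
  define A where "A = {w \<in> Y. P w}"
  define B where "B = {w \<in> Y. P (g w)}"
  have fin: "finite A" "finite B"
    using assms(1) unfolding A_def B_def by auto
  have "bij_betw g B A"
    using assms(2) unfolding A_def B_def bij_betw_def inj_on_def by auto
  then have "card A = card B"
    by (simp add: bij_betw_same_card)
  then have card_diff: "card (A - B) = card (B - A)"
    using fin by (simp add: card_Diff_subset_Int Int_commute)
  have "card ((A - B) \<union> (B - A)) = card (A - B) + card (B - A)"
    using fin by (intro card_Un_disjoint) auto
  moreover have "{w \<in> Y. P w \<noteq> P (g w)} = (A - B) \<union> (B - A)"
    unfolding A_def B_def by auto
  ultimately show ?thesis
    using card_diff by simp
qed

lemma face_xedges_mem_iff:
  assumes "x (x u) = u" "x u \<noteq> u"
  shows "{u, x u} \<in> face_xedges x F \<longleftrightarrow> u \<in> F \<or> x u \<in> F"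
proof
  assume "{u, x u} \<in> face_xedges x F"
  then obtain a where "{u, x u} = {a, x a}" "a \<in> F"
    unfolding face_xedges_def by auto
  then show "u \<in> F \<or> x u \<in> F"
    by (metis doubleton_eq_iff)
next
  have swap: "{u, x u} = {x u, x (x u)}" "x (x u) \<noteq> x u"
    using assms by auto
  assume "u \<in> F \<or> x u \<in> F"
  then show "{u, x u} \<in> face_xedges x F"
    using assms(2) swap unfolding face_xedges_def by blast
qed

lemma januarialD:
  assumes "januarial k S x y"
  shows "finite S" "x permutes S" "y permutes S" "\<And>u. u \<in> S \<Longrightarrow> x (x u) = u"
  using assms unfolding januarial_def triangle_action_def by auto

lemma januarial_xy_orbit:
  assumes "januarial k S x y" "F \<in> xy_orbits S x y"
  obtains a where "a \<in> S" "F = orbit (y \<circ> x) a" "permutation (y \<circ> x)"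
proof -
  have perm: "(y \<circ> x) permutes S" "finite S"
    using januarialD[OF assms(1)] by (auto intro: permutes_compose)
  obtain a where "a \<in> S" "F = cyc_orbit (y \<circ> x) a"
    using assms(2) unfolding xy_orbits_def by blast
  moreover have "permutation (y \<circ> x)"
    using perm permutation_permutes by blast
  ultimately show ?thesis
    using that cyc_orbit_eq_orbit[OF perm] by simp
qed

lemma januarial_xy_face_step_iff:
  assumes "januarial k S x y" "F \<in> xy_orbits S x y"
  shows "y (x z) \<in> F \<longleftrightarrow> z \<in> F"
proof -
  obtain a where "F = orbit (y \<circ> x) a" "permutation (y \<circ> x)"
    using januarial_xy_orbit[OF assms] .
  then show ?thesis
    using orbit_step_mem_iff[of "y \<circ> x" z a] by simp
qed

lemma januarial_other_face:
  assumes "januarial k S x y"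
    and "F1 \<in> xy_orbits S x y" "F2 \<in> xy_orbits S x y" "F1 \<noteq> F2" "u \<in> S"
  shows "u \<in> F2 \<longleftrightarrow> u \<notin> F1"
proof
  obtain a1 where F1: "F1 = orbit (y \<circ> x) a1" and perm: "permutation (y \<circ> x)"
    using januarial_xy_orbit[OF assms(1,2)] by blast
  obtain a2 where F2: "F2 = orbit (y \<circ> x) a2"
    using januarial_xy_orbit[OF assms(1,3)] by blast
  show "u \<notin> F1" if "u \<in> F2"
  proof
    assume "u \<in> F1"
    then have "orbit (y \<circ> x) u = F1" "orbit (y \<circ> x) u = F2"
      using that F1 F2 orbit_eq_iff_mem[OF perm] by simp_all
    then show False
      using assms(4) by simp
  qed
next
  have two: "card (xy_orbits S x y) = 2"
    using assms(1) unfolding januarial_def by simp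
  then have "finite (xy_orbits S x y)"
    by (intro card_ge_0_finite) simp
  then have "xy_orbits S x y = {F1, F2}"
    using assms(2-4) two by (intro card_subset_eq[symmetric]) auto
  moreover have "u \<in> cyc_orbit (y \<circ> x) u"
    unfolding cyc_orbit_def by (auto intro: exI[of _ 0])
  ultimately show "u \<in> F2" if "u \<notin> F1"
    using assms(5) that unfolding xy_orbits_def by blast
qed

lemma januarial_common_edge_iff:
  assumes "januarial k S x y"
    and "F1 \<in> xy_orbits S x y" "F2 \<in> xy_orbits S x y" "F1 \<noteq> F2" "u \<in> S"
  shows "x u \<noteq> u \<and> {u, x u} \<in> snd (common_graph x y F1 F2) \<longleftrightarrow> (u \<in> F1) \<noteq> (y u \<in> F1)"
proof -
  note S = januarialD[OF assms(1)]
  have xu: "x u \<in> S" "x (x u) = u"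
    using S(2,4) assms(5) by (auto simp: permutes_in_image)
  have y_step: "y u \<in> F1 \<longleftrightarrow> x u \<in> F1"
    using januarial_xy_face_step_iff[OF assms(1,2), of "x u"] xu(2) by simp
  show ?thesis
  proof (cases "x u = u")
    case True
    then show ?thesis
      using y_step by simp
  next
    case False
    moreover have "u \<in> F2 \<longleftrightarrow> u \<notin> F1" "x u \<in> F2 \<longleftrightarrow> x u \<notin> F1"
      using januarial_other_face[OF assms(1-4)] assms(5) xu(1) by blast+
    ultimately show ?thesis
      unfolding common_graph_def companion_image_def
      using y_step face_xedges_mem_iff[OF xu(2) False] by auto
  qed
qed

lemma januarial_common_vertex:
  assumes "januarial k S x y" "F1 \<in> xy_orbits S x y" "Y \<in> fst (common_graph x y F1 F2)"
  obtains v where "v \<in> S" "Y = orbit y v"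
proof -
  note S = januarialD[OF assms(1)]
  obtain a where "F1 = orbit (y \<circ> x) a" "a \<in> S"
    using januarial_xy_orbit[OF assms(1,2)] by blast
  then have "F1 \<subseteq> S"
    using permutes_orbit_subset[OF permutes_compose[OF S(2,3)]] by simp
  then have "face_vertices x F1 \<subseteq> S"
    using S(2) unfolding face_vertices_def by (auto simp: permutes_in_image)
  moreover have "Y \<in> cyc_orbit y ` face_vertices x F1"
    using assms(3) by (simp add: common_graph_def companion_image_def)
  then obtain v where v: "v \<in> face_vertices x F1" "Y = cyc_orbit y v" ..
  ultimately show ?thesis
    using that cyc_orbit_eq_orbit[OF S(3,1)] by blast
qed

lemma januarial_valency_eq:
  assumes "januarial k S x y"
    and "F1 \<in> xy_orbits S x y" "F2 \<in> xy_orbits S x y" "F1 \<noteq> F2" "v \<in> S"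
  shows "valency S x y (common_graph x y F1 F2) (orbit y v)
    = card {w \<in> orbit y v. (w \<in> F1) \<noteq> (y w \<in> F1)}"
proof -
  note S = januarialD[OF assms(1)]
  have perm_y: "permutation y"
    using S(1,3) permutation_permutes by blast
  have in_orbit: "cyc_orbit y u = orbit y v \<longleftrightarrow> u \<in> orbit y v" for u
    using orbit_eq_iff_mem[OF perm_y] cyc_orbit_eq_orbit[OF S(3,1)] by simp
  have dart_iff: "x u \<noteq> u \<and> {u, x u} \<in> snd (common_graph x y F1 F2) \<and> cyc_orbit y u = orbit y v
      \<longleftrightarrow> u \<in> orbit y v \<and> (u \<in> F1) \<noteq> (y u \<in> F1)" if "u \<in> S" for u
    using januarial_common_edge_iff[OF assms(1-4) that] in_orbit[of u] by argo
  have "orbit y v \<subseteq> S"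
    using permutes_orbit_subset[OF S(3) assms(5)] .
  then show ?thesis
    unfolding valency_def using dart_iff by (intro arg_cong[where f = card]) blast
qed

theorem proposition2:
  fixes k :: nat and S :: "'a set" and x y :: "'a \<Rightarrow> 'a"
  assumes "k \<ge> 2"
    and "januarial k S x y"
    and "F1 \<in> xy_orbits S x y" and "F2 \<in> xy_orbits S x y" and "F1 \<noteq> F2"
    and "Y \<in> fst (common_graph x y F1 F2)"
  shows "even (valency S x y (common_graph x y F1 F2) Y)"
proof -
  have perm_y: "permutation y"
    using januarialD[OF assms(2)] permutation_permutes by blast
  obtain v where "v \<in> S" and Y: "Y = orbit y v"
    using januarial_common_vertex[OF assms(2,3,6)] .
  have "even (card {w \<in> Y. (w \<in> F1) \<noteq> (y w \<in> F1)})"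
  proof (rule even_card_colour_changes)
    show "finite Y"
      using Y finite_orbit[OF permutation_self_in_orbit[OF perm_y]] by simp
    show "bij_betw y Y Y"
      using Y bij_betw_orbit[OF perm_y] by simp
  qed
  then show ?thesis
    using januarial_valency_eq[OF assms(2-5) \<open>v \<in> S\<close>] Y by simp
qed

end
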